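(* Let $\tau=(\tau_1,\dots,\tau_\ell)$ be a tuple of positive integers, $0\le k\le\ell$, and $\hat P_\tau=C\sqcup O$ the $k$-decomposition. Let $p_i,p'_i\in Y^i$ for $1\le i\le k$ and $a,a'\in Y^{k+1}$, and put $p_{k+1}=a$, $p'_{k+1}=a'$. Let $F$ be the face of $\mathcal{O}_{C,O}(\tau)$ on which both chain inequalities $x_{p_1}+\dots+x_{p_k}\le x_a$ and $x_{p'_1}+\dots+x_{p'_k}\le x_{a'}$ hold with equality. Let $I=\{i\in\{1,\dots,k+1\}: p_i\neq p'_i\}$ and define $\tau'=(\tau'_1,\dots,\tau'_\ell)$ by $\tau'_j=\tau_j-1$ if $j\in I$ and $\tau'_j=\tau_j$ otherwise. Identify $\hat P_{\tau'}$ with the induced subposet $\hat P_\tau\setminus\{p'_i: i\in I\}$ and let $\hat P_{\tau'}=C''\sqcup O''$ be its $k$-decomposition. Let $F'$ be the face of $\mathcal{O}_{C'',O''}(\tau')$ on which the chain inequality $x_{p_1}+\dots+x_{p_k}\le x_a$ holds with equality. Then the coordinate projection forgetting the coordinates $x_{p'_i}$, $i\in I$, is an affine isomorphism $\nu:F\to F'$. Moreover, each coordinate projected away contributes exactly one to the codimension: the codimension of $F$ in $\mathcal{O}_{C,O}(\tau)$ equals the codimension of $F'$ in $\mathcal{O}_{C'',O''}(\tau')$ plus $|I|$.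
   Context: The poset $P_\tau$ has elements $y^i_j$ ($1\le i\le\ell$, $1\le j\le\tau_i$) with $y^i_j<y^{i'}_{j'}$ iff $i<i'$; $Y^i=\{y^i_1,\dots,y^i_{\tau_i}\}$; $|\tau|=\sum_i\tau_i$. $\hat P_\tau=P_\tau\cup\{\hat0,\hat1\}$ with new minimum $\hat0$ and maximum $\hat1$, $Y^0=\{\hat0\}$, $Y^{\ell+1}=\{\hat1\}$; $\prec$ is the covering relation. For $0\le k\le\ell$ the $k$-decomposition is $C=Y^0\cup\dots\cup Y^k$, $O=Y^{k+1}\cup\dots\cup Y^{\ell+1}$. The chain-order polytope $\mathcal{O}_{C,O}(\tau)\subseteq\mathbb{R}^{\hat P_\tau}$ consists of all $x$ with $x_{\hat0}=0$, $x_{\hat1}=1$, $x_p\ge0$ for $p\in C$, $x_a\le x_b$ for $a,b\in O$ with $a\prec b$, and $x_{p_1}+\dots+x_{p_k}\le x_q$ for all $p_i\in Y^i$ ($1\le i\le k$), $q\in Y^{k+1}$ (chain inequalities). The same definitions apply to any tuple of positive integers in place of $\tau$. The codimension of a face $F$ of $\mathcal{O}_{C,O}(\tau)$ is $|\tau|-\dim F$. *)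

theory Defs
  imports "HOL-Analysis.Analysis" "HOL-Library.Function_Algebras"
begin

text \<open>Pointwise real vector space structure on real-valued functions, so that the
  library notions (affine dependence, linear maps) apply to points of R^P.\<close>

instantiation "fun" :: (type, real_vector) real_vector
begin
definition scaleR_fun :: "real \<Rightarrow> ('a \<Rightarrow> 'b) \<Rightarrow> 'a \<Rightarrow> 'b"
  where "scaleR_fun r f = (\<lambda>x. r *\<^sub>R f x)"
instance
  by standard (auto simp: scaleR_fun_def plus_fun_def scaleR_add_right scaleR_add_left)
end

definition faff_dim :: "('a \<Rightarrow> real) set \<Rightarrow> int" where
  "faff_dim S = (if S = {} then -1 else
     Sup {int (card B) - 1 | B. B \<subseteq> S \<and> finite B \<and> \<not> affine_dependent B})"

text \<open>The levels Y^0, ..., Y^(l+1) of hat P_tau, for tau a list of length l.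
  y^i_j is encoded as (i,j); hat0 = (0,0), hat1 = (l+1,0).\<close>

definition tauY :: "nat list \<Rightarrow> nat \<Rightarrow> (nat \<times> nat) set" where
  "tauY \<tau> i = (if i = 0 then {(0,0)}
     else if i \<le> length \<tau> then {i} \<times> {1..\<tau> ! (i - 1)}
     else if i = length \<tau> + 1 then {(i,0)} else {})"

text \<open>Chain-order polytope O_{C,O} for the k-decomposition of a graded poset whose
  levels are Y 0, ..., Y (l+1) (with Y 0 = {hat0}, Y (l+1) = {hat1}, and p < q iff
  level(p) < level(q)); the covering relation relates consecutive levels.
  Points are functions vanishing outside the ground set (i.e. elements of R^P).\<close>

definition COP :: "(nat \<Rightarrow> 'a set) \<Rightarrow> nat \<Rightarrow> nat \<Rightarrow> ('a \<Rightarrow> real) set" where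
  "COP Y l k = {x.
     (\<forall>q. q \<notin> (\<Union>i\<le>l+1. Y i) \<longrightarrow> x q = 0) \<and>
     (\<forall>q\<in>Y 0. x q = 0) \<and>
     (\<forall>q\<in>Y (l+1). x q = 1) \<and>
     (\<forall>i\<le>k. \<forall>q\<in>Y i. 0 \<le> x q) \<and>
     (\<forall>i. k + 1 \<le> i \<and> i \<le> l \<longrightarrow> (\<forall>a\<in>Y i. \<forall>b\<in>Y (i+1). x a \<le> x b)) \<and>
     (\<forall>p q. (\<forall>i\<in>{1..k}. p i \<in> Y i) \<and> q \<in> Y (k+1) \<longrightarrow> (\<Sum>i=1..k. x (p i)) \<le> x q)}"

end

theory Submission
  imports Defs
begin

text \<open>On the face F, for every i with p i \<noteq> p' i the coordinates at p i and p' i agree: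
  exchanging these two points between the two tight chains gives two further chain
  inequalities, and adding them to the two equalities forces both to be equalities.
  Hence forgetting the coordinates at the points p' i loses nothing on F; the inverse
  copies the value at p i back to p' i.  Deleting the points p' i from the poset turns F
  into the face F' of the smaller polytope, both maps are linear and hence preserve affine
  dimension, and |\<tau>| drops by exactly |I|.\<close>

lemma affine_dependent_linear_image:
  fixes f :: "'a::real_vector \<Rightarrow> 'b::real_vector"
  assumes "linear f" "finite S" "inj_on f S" "affine_dependent S"
  shows "affine_dependent (f ` S)"
proof -
  obtain U v where U: "sum U S = 0" "v \<in> S" "U v \<noteq> 0" "(\<Sum>v\<in>S. U v *\<^sub>R v) = 0"
    using assms(4) affine_dependent_explicit_finite[OF assms(2)] by auto
  define U' where "U' = U \<circ> the_inv_into S f"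
  have inv: "\<And>x. x \<in> S \<Longrightarrow> the_inv_into S f (f x) = x"
    using assms(3) the_inv_into_f_f by metis
  have "sum U' (f ` S) = 0"
    using assms(3) U(1) by (simp add: sum.reindex U'_def inv cong: sum.cong)
  moreover have "(\<Sum>w\<in>f ` S. U' w *\<^sub>R w) = f (\<Sum>v\<in>S. U v *\<^sub>R v)"
    using assms(3)
    by (simp add: sum.reindex U'_def inv linear_sum[OF assms(1)] linear_scale[OF assms(1)]
        cong: sum.cong)
  then have "(\<Sum>w\<in>f ` S. U' w *\<^sub>R w) = 0"
    using U(4) linear_0[OF assms(1)] by simp
  moreover have "U' (f v) \<noteq> 0"
    using U(2,3) inv by (simp add: U'_def)
  ultimately show ?thesis
    unfolding affine_dependent_explicit_finite[OF finite_imageI[OF assms(2)]]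
    using U(2) by blast
qed

lemma faff_dim_witnesses_linear_image:
  fixes f g :: "('a \<Rightarrow> real) \<Rightarrow> ('a \<Rightarrow> real)"
  assumes "linear f" "linear g" "f ` S \<subseteq> T" "\<forall>x\<in>S. g (f x) = x"
  shows "{int (card B) - 1 | B. B \<subseteq> S \<and> finite B \<and> \<not> affine_dependent B}
       \<subseteq> {int (card B) - 1 | B. B \<subseteq> T \<and> finite B \<and> \<not> affine_dependent B}"
proof
  fix z assume "z \<in> {int (card B) - 1 | B. B \<subseteq> S \<and> finite B \<and> \<not> affine_dependent B}"
  then obtain B where B: "z = int (card B) - 1" "B \<subseteq> S" "finite B" "\<not> affine_dependent B"
    by auto
  have "inj_on f B" using B(2) assms(4) by (metis inj_on_inverseI subset_iff)
  then have "card (f ` B) = card B" by (rule card_image)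
  have "g ` f ` B = B" using B(2) assms(4) by (force simp: image_image)
  moreover have "inj_on g (f ` B)" using B(2) assms(4) by (auto simp: inj_on_def subset_iff)
  ultimately have "\<not> affine_dependent (f ` B)"
    using affine_dependent_linear_image[OF assms(2)] B(3,4) by (metis finite_imageI)
  with \<open>card (f ` B) = card B\<close>
  show "z \<in> {int (card B) - 1 | B. B \<subseteq> T \<and> finite B \<and> \<not> affine_dependent B}"
    using B assms(3) by (auto intro!: exI[of _ "f ` B"])
qed

lemma faff_dim_linear_inverses:
  fixes f g :: "('a \<Rightarrow> real) \<Rightarrow> ('a \<Rightarrow> real)"
  assumes "linear f" "linear g" "f ` S \<subseteq> T" "g ` T \<subseteq> S"
    and "\<forall>x\<in>S. g (f x) = x" "\<forall>y\<in>T. f (g y) = y"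
  shows "faff_dim S = faff_dim T"
proof -
  have "S = {} \<longleftrightarrow> T = {}" using assms(3,4) by auto
  moreover have "{int (card B) - 1 | B. B \<subseteq> S \<and> finite B \<and> \<not> affine_dependent B}
               = {int (card B) - 1 | B. B \<subseteq> T \<and> finite B \<and> \<not> affine_dependent B}"
    using faff_dim_witnesses_linear_image[OF assms(1,2,3,5)]
      faff_dim_witnesses_linear_image[OF assms(2,1,4,6)] by blast
  ultimately show ?thesis unfolding faff_dim_def by simp
qed

lemma COP_chain_le:
  assumes "x \<in> COP Y l k" "\<forall>i\<in>{1..k}. p i \<in> Y i" "q \<in> Y (k+1)"
  shows "(\<Sum>i=1..k. x (p i)) \<le> x q"
  using assms unfolding COP_def by blast

lemma COP_vanishes_outside:
  assumes "x \<in> COP Y l k" "q \<notin> (\<Union>i\<le>l+1. Y i)"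
  shows "x q = 0"
  using assms unfolding COP_def by blast

lemma COP_tight_chains_agree:
  assumes x: "x \<in> COP Y l k"
    and pY: "\<forall>i\<in>{1..k+1}. p i \<in> Y i \<and> p' i \<in> Y i"
    and tight: "(\<Sum>i=1..k. x (p i)) = x (p (k+1))" "(\<Sum>i=1..k. x (p' i)) = x (p' (k+1))"
    and i: "i \<in> {1..k+1}"
  shows "x (p' i) = x (p i)"
proof (cases "i = k + 1")
  case True
  have "(\<Sum>j=1..k. x (p j)) \<le> x (p' (k+1))" "(\<Sum>j=1..k. x (p' j)) \<le> x (p (k+1))"
    using COP_chain_le[OF x] pY by auto
  with tight True show ?thesis by simp
next
  case False
  then have i: "i \<in> {1..k}" using i by auto
  have swap: "(\<Sum>j=1..k. x ((q(i := q' i)) j)) = (\<Sum>j=1..k. x (q j)) - x (q i) + x (q' i)"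
    for q q' :: "nat \<Rightarrow> 'a"
    using sum.remove[OF finite_atLeastAtMost i, of "\<lambda>j. x ((q(i := q' i)) j)"]
      sum.remove[OF finite_atLeastAtMost i, of "\<lambda>j. x (q j)"] by simp
  have "(\<Sum>j=1..k. x ((p(i := p' i)) j)) \<le> x (p (k+1))"
    "(\<Sum>j=1..k. x ((p'(i := p i)) j)) \<le> x (p' (k+1))"
    using COP_chain_le[OF x] pY i by auto
  with tight show ?thesis unfolding swap by simp
qed

lemma COP_comp_level_map:
  assumes y: "y \<in> COP Y' l k"
    and levels: "\<And>i q. q \<in> Y i \<Longrightarrow> r q \<in> Y' i"
    and outside: "\<And>q. q \<notin> (\<Union>i\<le>l+1. Y i) \<Longrightarrow> r q \<notin> (\<Union>i\<le>l+1. Y' i)"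
  shows "y \<circ> r \<in> COP Y l k"
proof -
  have "(\<Sum>i=1..k. y (r (p i))) \<le> y (r q)" if "\<forall>i\<in>{1..k}. p i \<in> Y i" "q \<in> Y (k+1)" for p q
    using COP_chain_le[OF y, of "r \<circ> p"] that levels by simp
  with y levels outside show ?thesis unfolding COP_def by auto
qed

definition zero_coords :: "'a set \<Rightarrow> ('a \<Rightarrow> real) \<Rightarrow> 'a \<Rightarrow> real" where
  "zero_coords R x = (\<lambda>q. if q \<in> R then 0 else x q)"

definition copy_coords ::
    "(nat \<times> 'b) set \<Rightarrow> (nat \<Rightarrow> nat \<times> 'b) \<Rightarrow> (nat \<times> 'b \<Rightarrow> real) \<Rightarrow> nat \<times> 'b \<Rightarrow> real" where
  "copy_coords R p y = (\<lambda>q. y (if q \<in> R then p (fst q) else q))"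

lemma linear_zero_coords: "linear (zero_coords R)"
  by (rule linearI) (auto simp: zero_coords_def plus_fun_def scaleR_fun_def)

lemma linear_copy_coords: "linear (copy_coords R p)"
  by (rule linearI) (auto simp: copy_coords_def plus_fun_def scaleR_fun_def)

lemma COP_zero_coords:
  assumes "x \<in> COP Y l k"
  shows "zero_coords R x \<in> COP (\<lambda>i. Y i - R) l k"
proof -
  have "(\<Sum>i=1..k. x (p i)) \<le> x q" if "\<forall>i\<in>{1..k}. p i \<in> Y i - R" "q \<in> Y (k+1) - R" for p q
    using COP_chain_le[OF assms] that by blast
  moreover have "(\<Sum>i=1..k. zero_coords R x (p i)) = (\<Sum>i=1..k. x (p i))"
    if "\<forall>i\<in>{1..k}. p i \<in> Y i - R" for p
    using that by (intro sum.cong) (auto simp: zero_coords_def)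
  ultimately show ?thesis using assms unfolding COP_def by (auto simp: zero_coords_def)
qed

lemma COP_copy_coords:
  fixes Y :: "nat \<Rightarrow> (nat \<times> 'b) set"
  assumes y: "y \<in> COP (\<lambda>i. Y i - R) l k"
    and lev: "\<And>i q. q \<in> Y i \<Longrightarrow> fst q = i"
    and R: "\<And>q. q \<in> R \<Longrightarrow> fst q \<le> l + 1 \<and> q \<in> Y (fst q) \<and> p (fst q) \<in> Y (fst q) - R"
  shows "copy_coords R p y \<in> COP Y l k"
proof -
  have "copy_coords R p y = y \<circ> (\<lambda>q. if q \<in> R then p (fst q) else q)"
    unfolding copy_coords_def by auto
  also have "\<dots> \<in> COP Y l k"
  proof (rule COP_comp_level_map[OF y])
    show "(if q \<in> R then p (fst q) else q) \<in> Y i - R" if "q \<in> Y i" for i q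
    proof (cases "q \<in> R")
      case True
      then show ?thesis using R[OF True] lev[OF that] by simp
    qed (use that in simp)
    show "(if q \<in> R then p (fst q) else q) \<notin> (\<Union>i\<le>l+1. Y i - R)"
      if "q \<notin> (\<Union>i\<le>l+1. Y i)" for q
    proof -
      have "q \<notin> R" using that R by blast
      with that show ?thesis by auto
    qed
  qed
  finally show ?thesis .
qed

definition chain_face ::
    "(nat \<Rightarrow> 'a set) \<Rightarrow> nat \<Rightarrow> nat \<Rightarrow> (nat \<Rightarrow> 'a) set \<Rightarrow> ('a \<Rightarrow> real) set" where
  "chain_face Y l k Ps = {x \<in> COP Y l k. \<forall>p\<in>Ps. (\<Sum>i=1..k. x (p i)) = x (p (k+1))}"

lemma zero_coords_chain_face:
  assumes x: "x \<in> chain_face Y l k Ps" and kept: "\<forall>p\<in>Ps. \<forall>i\<in>{1..k+1}. p i \<notin> R"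
  shows "zero_coords R x \<in> chain_face (\<lambda>i. Y i - R) l k Ps"
proof -
  have "zero_coords R x (p i) = x (p i)" if "p \<in> Ps" "i \<in> {1..k+1}" for p i
    using kept that by (simp add: zero_coords_def)
  then have "(\<Sum>i=1..k. zero_coords R x (p i)) = zero_coords R x (p (k+1))" if "p \<in> Ps" for p
    using x that unfolding chain_face_def by simp
  with COP_zero_coords x show ?thesis unfolding chain_face_def by blast
qed

lemma zero_copy_coords:
  assumes "y \<in> COP (\<lambda>i. Y i - R) l k"
  shows "zero_coords R (copy_coords R p y) = y"
proof
  fix q
  have "y q = 0" if "q \<in> R"
    using COP_vanishes_outside[OF assms] that by blast
  then show "zero_coords R (copy_coords R p y) q = y q"
    unfolding copy_coords_def zero_coords_def by simp
qed

lemma chain_not_in_differing_image: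
  fixes Y :: "nat \<Rightarrow> (nat \<times> 'b) set"
  assumes lev: "\<And>i q. q \<in> Y i \<Longrightarrow> fst q = i"
    and pY: "\<forall>i\<in>{1..k+1}. p i \<in> Y i \<and> p' i \<in> Y i"
    and i: "i \<in> {1..k+1}"
  shows "p i \<notin> p' ` {j\<in>{1..k+1}. p j \<noteq> p' j}"
proof
  assume "p i \<in> p' ` {j\<in>{1..k+1}. p j \<noteq> p' j}"
  then obtain j where j: "j \<in> {1..k+1}" "p j \<noteq> p' j" "p i = p' j"
    by blast
  then have "i = j" using lev pY i by metis
  with j show False by simp
qed

context
  fixes Y :: "nat \<Rightarrow> (nat \<times> 'b) set" and p p' :: "nat \<Rightarrow> nat \<times> 'b" and l k :: nat
  assumes lev: "\<And>i q. q \<in> Y i \<Longrightarrow> fst q = i"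
    and k: "k \<le> l"
    and pY: "\<forall>i\<in>{1..k+1}. p i \<in> Y i \<and> p' i \<in> Y i"
begin

lemma copy_coords_chain_face:
  assumes "y \<in> chain_face (\<lambda>i. Y i - p' ` {j\<in>{1..k+1}. p j \<noteq> p' j}) l k {p}"
  shows "copy_coords (p' ` {j\<in>{1..k+1}. p j \<noteq> p' j}) p y \<in> chain_face Y l k {p, p'}"
proof -
  define R where "R = p' ` {j\<in>{1..k+1}. p j \<noteq> p' j}"
  have y: "y \<in> COP (\<lambda>i. Y i - R) l k" and tight: "(\<Sum>i=1..k. y (p i)) = y (p (k+1))"
    using assms unfolding chain_face_def R_def by auto
  have p_kept: "p i \<notin> R" if "i \<in> {1..k+1}" for i
    unfolding R_def by (rule chain_not_in_differing_image[OF lev pY that])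
  have p'_lev: "fst (p' i) = i" if "i \<in> {1..k+1}" for i
    using lev pY that by blast
  have "fst q \<le> l + 1 \<and> q \<in> Y (fst q) \<and> p (fst q) \<in> Y (fst q) - R" if "q \<in> R" for q
  proof -
    obtain i where i: "i \<in> {1..k+1}" "q = p' i" using \<open>q \<in> R\<close> unfolding R_def by blast
    then show ?thesis using pY p'_lev[OF i(1)] p_kept[OF i(1)] k by auto
  qed
  then have "copy_coords R p y \<in> COP Y l k"
    using COP_copy_coords[OF y lev] by blast
  moreover have "copy_coords R p y (p i) = y (p i)" "copy_coords R p y (p' i) = y (p i)"
    if "i \<in> {1..k+1}" for i
    using that p_kept[OF that] p'_lev[OF that] unfolding copy_coords_def R_def by auto
  ultimately show ?thesis
    using tight unfolding chain_face_def R_def by simp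
qed

lemma copy_zero_coords_chain_face:
  assumes x: "x \<in> chain_face Y l k {p, p'}"
  shows "copy_coords (p' ` {j\<in>{1..k+1}. p j \<noteq> p' j}) p
           (zero_coords (p' ` {j\<in>{1..k+1}. p j \<noteq> p' j}) x) = x"
    (is "copy_coords ?R p (zero_coords ?R x) = x")
proof
  fix q
  show "copy_coords ?R p (zero_coords ?R x) q = x q"
  proof (cases "q \<in> ?R")
    case True
    then obtain i where i: "i \<in> {1..k+1}" "q = p' i" by blast
    have "x (p' i) = x (p i)"
      using COP_tight_chains_agree[OF _ pY _ _ i(1)] x unfolding chain_face_def by auto
    moreover have "fst (p' i) = i" using lev pY i(1) by blast
    ultimately show ?thesis
      using i chain_not_in_differing_image[OF lev pY i(1)]
      unfolding copy_coords_def zero_coords_def by simp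
  qed (simp add: copy_coords_def zero_coords_def)
qed

lemma chain_faces_zero_coords_iso:
  defines "R \<equiv> p' ` {i\<in>{1..k+1}. p i \<noteq> p' i}"
  shows "bij_betw (zero_coords R) (chain_face Y l k {p, p'}) (chain_face (\<lambda>i. Y i - R) l k {p})
       \<and> faff_dim (chain_face Y l k {p, p'}) = faff_dim (chain_face (\<lambda>i. Y i - R) l k {p})"
proof -
  let ?F = "chain_face Y l k {p, p'}" and ?F' = "chain_face (\<lambda>i. Y i - R) l k {p}"
  have to_F': "zero_coords R x \<in> ?F'" if "x \<in> ?F" for x
  proof -
    have "x \<in> chain_face Y l k {p}"
      using that unfolding chain_face_def by auto
    then show ?thesis
      using zero_coords_chain_face chain_not_in_differing_image[OF lev pY] unfolding R_def by blast
  qed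
  have to_F: "copy_coords R p y \<in> ?F" if "y \<in> ?F'" for y
    using copy_coords_chain_face that unfolding R_def .
  have copy_zero: "copy_coords R p (zero_coords R x) = x" if "x \<in> ?F" for x
    using copy_zero_coords_chain_face that unfolding R_def .
  have zero_copy: "zero_coords R (copy_coords R p y) = y" if "y \<in> ?F'" for y
    using zero_copy_coords that unfolding chain_face_def by blast
  show ?thesis
  proof
    show "bij_betw (zero_coords R) ?F ?F'"
      by (rule bij_betw_byWitness[of _ "copy_coords R p"])
        (use to_F' to_F copy_zero zero_copy in auto)
    show "faff_dim ?F = faff_dim ?F'"
      by (rule faff_dim_linear_inverses[OF linear_zero_coords linear_copy_coords])
        (use to_F' to_F copy_zero zero_copy in auto)
  qed
qed

end

lemma sum_list_decrement_at:
  fixes \<tau> :: "nat list"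
  assumes pos: "\<forall>t\<in>set \<tau>. 0 < t" and J: "J \<subseteq> {1..length \<tau>}"
  shows "sum_list (map (\<lambda>j. if j + 1 \<in> J then \<tau> ! j - 1 else \<tau> ! j) [0..<length \<tau>]) + card J
       = sum_list \<tau>"
proof -
  let ?l = "length \<tau>"
  have J_eq: "J = Suc ` {j\<in>{0..<?l}. j + 1 \<in> J}"
  proof
    show "J \<subseteq> Suc ` {j\<in>{0..<?l}. j + 1 \<in> J}"
    proof
      fix i assume "i \<in> J"
      with J have "1 \<le> i" "i \<le> ?l" by auto
      with \<open>i \<in> J\<close> show "i \<in> Suc ` {j\<in>{0..<?l}. j + 1 \<in> J}"
        by (intro image_eqI[of _ _ "i - 1"]) auto
    qed
  qed auto
  have "card J = card {j\<in>{0..<?l}. j + 1 \<in> J}"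
    by (subst J_eq) (simp add: card_image)
  also have "\<dots> = (\<Sum>j=0..<?l. if j + 1 \<in> J then 1 else 0)"
    by (simp add: sum.If_cases Int_def conj_commute)
  finally have "card J = (\<Sum>j=0..<?l. if j + 1 \<in> J then 1 else 0)" .
  moreover have "(\<Sum>j=0..<?l. (if j + 1 \<in> J then \<tau> ! j - 1 else \<tau> ! j)
                                   + (if j + 1 \<in> J then 1 else 0)) = (\<Sum>j=0..<?l. \<tau> ! j)"
    using pos by (intro sum.cong) auto
  ultimately show ?thesis
    by (simp add: interv_sum_list_conv_sum_set_nat sum.distrib flip: sum_list_sum_nth)
qed

lemma tauY_fst: "q \<in> tauY \<tau> i \<Longrightarrow> fst q = i"
  by (auto simp: tauY_def split: if_splits)

lemma tauY_top: "tauY \<tau> (length \<tau> + 1) = {(length \<tau> + 1, 0)}"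
  by (simp add: tauY_def)

lemma tauY_differing_levels:
  assumes k: "k \<le> length \<tau>" and pY: "\<forall>i\<in>{1..k+1}. p i \<in> tauY \<tau> i \<and> p' i \<in> tauY \<tau> i"
  shows "{i\<in>{1..k+1}. p i \<noteq> p' i} \<subseteq> {1..length \<tau>}"
proof
  fix i assume i: "i \<in> {i\<in>{1..k+1}. p i \<noteq> p' i}"
  have "i \<noteq> length \<tau> + 1"
  proof
    assume top: "i = length \<tau> + 1"
    then have "p i \<in> tauY \<tau> (length \<tau> + 1)" "p' i \<in> tauY \<tau> (length \<tau> + 1)"
      using pY i by blast+
    with i show False unfolding tauY_top by simp
  qed
  with i k show "i \<in> {1..length \<tau>}" by simp
qed

theorem proposition3p7:
  fixes \<tau> :: "nat list" and k :: nat and p p' :: "nat \<Rightarrow> nat \<times> nat"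
  assumes pos: "\<forall>t\<in>set \<tau>. 0 < t"
    and k: "k \<le> length \<tau>"
    and pY: "\<forall>i\<in>{1..k+1}. p i \<in> tauY \<tau> i \<and> p' i \<in> tauY \<tau> i"
  defines "I \<equiv> {i\<in>{1..k+1}. p i \<noteq> p' i}"
  defines "\<tau>' \<equiv> map (\<lambda>j. if j + 1 \<in> I then \<tau> ! j - 1 else \<tau> ! j) [0..<length \<tau>]"
  defines "Y'' \<equiv> (\<lambda>i. tauY \<tau> i - p' ` I)"
  defines "F \<equiv> {x \<in> COP (tauY \<tau>) (length \<tau>) k.
                 (\<Sum>i=1..k. x (p i)) = x (p (k+1)) \<and> (\<Sum>i=1..k. x (p' i)) = x (p' (k+1))}"
  defines "F' \<equiv> {x \<in> COP Y'' (length \<tau>) k. (\<Sum>i=1..k. x (p i)) = x (p (k+1))}"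
  defines "\<nu> \<equiv> (\<lambda>x::nat \<times> nat \<Rightarrow> real. \<lambda>q. if q \<in> p' ` I then 0 else x q)"
  shows "linear \<nu> \<and> bij_betw \<nu> F F' \<and>
         int (sum_list \<tau>) - faff_dim F = (int (sum_list \<tau>') - faff_dim F') + int (card I)"
proof -
  have \<nu>: "\<nu> = zero_coords (p' ` I)"
    unfolding \<nu>_def zero_coords_def ..
  have "F = chain_face (tauY \<tau>) (length \<tau>) k {p, p'}" "F' = chain_face Y'' (length \<tau>) k {p}"
    unfolding F_def F'_def chain_face_def by auto
  then have iso: "bij_betw \<nu> F F' \<and> faff_dim F = faff_dim F'"
    using chain_faces_zero_coords_iso[OF tauY_fst k pY] unfolding \<nu> Y''_def I_def by simp
  have "sum_list \<tau>' + card I = sum_list \<tau>"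
    unfolding \<tau>'_def I_def by (rule sum_list_decrement_at[OF pos tauY_differing_levels[OF k pY]])
  then have "int (sum_list \<tau>) = int (sum_list \<tau>') + int (card I)"
    by (metis of_nat_add)
  with iso show ?thesis
    unfolding \<nu> using linear_zero_coords by simp
qed

end
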